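(* Let $X$ be a commutative topological algebra over $\mathbb{K}$, let $M\subset X$, and let $\alpha\ge\aleph_0$ be a cardinal with $\alpha\ge w(X)$. Then $M$ is $\alpha$-infinitely strongly $\alpha$-dense-algebrable if and only if $M$ is strongly $\alpha$-dense-algebrable.
   Context: Algebras are associative linear algebras over $\mathbb{K}$; a topological algebra has continuous sum, product and scalar multiplication. $w(X)$ is the smallest cardinality of a base of the topology. $\langle S\rangle$ is the subalgebra generated by $S$. With $\mathbb{P}_n$ the polynomials in $n$ variables without constant term, $S$ is a set of free generators (SFG) if $P(x_1,\dots,x_n)\neq 0$ for every $n$, every non-zero $P\in\mathbb{P}_n$ and all pairwise distinct $x_1,\dots,x_n\in S$. An $\alpha$-generated free subalgebra is a subalgebra $\langle F\rangle$ with $F$ an SFG of cardinality $\alpha$. $M$ is strongly $\alpha$-dense-algebrable if $M\cup\{0\}$ contains a dense $\alpha$-generated free subalgebra of $X$. For $\alpha\ge\aleph_0$, $M$ is $\alpha$-infinitely strongly $\alpha$-dense-algebrable if there is a family $\{Y_\kappa\}_{\kappa<\alpha}$ of dense $\alpha$-generated free subalgebras of $X$ with $Y_\kappa\subset M\cup\{0\}$ for all $\kappa$ and $Y_{\kappa_1}\cap Y_{\kappa_2}=\{0\}$ for $\kappa_1\ne\kappa_2$. *)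

theory Defs
  imports "HOL-Analysis.Analysis" "HOL-Library.Equipollence"
begin

text \<open>A commutative topological algebra over a scalar field K: the carrier is a type 'a of
class comm_ring (associative, commutative, not necessarily unital) with a topology
(class topological_space); the K-action is the parameter sm.\<close>

definition comm_top_algebra :: "('k::{comm_ring_1,topological_space} \<Rightarrow> 'a::{comm_ring,topological_space} \<Rightarrow> 'a) \<Rightarrow> bool" where
  "comm_top_algebra sm \<longleftrightarrow>
     (\<forall>a x y. sm a (x + y) = sm a x + sm a y) \<and>
     (\<forall>a b x. sm (a + b) x = sm a x + sm b x) \<and>
     (\<forall>a b x. sm a (sm b x) = sm (a * b) x) \<and>
     (\<forall>x. sm 1 x = x) \<and>
     (\<forall>a x y. sm a (x * y) = sm a x * y) \<and>
     continuous_on UNIV (\<lambda>p::'a \<times> 'a. fst p + snd p) \<and>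
     continuous_on UNIV (\<lambda>p::'a \<times> 'a. fst p * snd p) \<and>
     continuous_on UNIV (\<lambda>p::'k \<times> 'a. sm (fst p) (snd p))"

definition is_subalgebra :: "('k::comm_ring_1 \<Rightarrow> 'a::comm_ring \<Rightarrow> 'a) \<Rightarrow> 'a set \<Rightarrow> bool" where
  "is_subalgebra sm T \<longleftrightarrow> 0 \<in> T \<and> (\<forall>x\<in>T. \<forall>y\<in>T. x + y \<in> T \<and> x * y \<in> T) \<and>
     (\<forall>a. \<forall>x\<in>T. sm a x \<in> T)"

definition gen_alg :: "('k::comm_ring_1 \<Rightarrow> 'a::comm_ring \<Rightarrow> 'a) \<Rightarrow> 'a set \<Rightarrow> 'a set" where
  "gen_alg sm S = \<Inter>{T. S \<subseteq> T \<and> is_subalgebra sm T}"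

fun nprod :: "'a::comm_ring list \<Rightarrow> 'a" where
  "nprod [] = 0"
| "nprod [x] = x"
| "nprod (x # y # xs) = x * nprod (y # xs)"

definition monomial_eval :: "nat \<Rightarrow> (nat \<Rightarrow> 'a::comm_ring) \<Rightarrow> (nat \<Rightarrow> nat) \<Rightarrow> 'a" where
  "monomial_eval n x e = nprod (concat (map (\<lambda>i. replicate (e i) (x i)) [0..<n]))"

text \<open>A polynomial in n variables without constant term (element of P_n) is given by its
coefficient function on exponent vectors: finitely many nonzero coefficients, all on
nonzero exponent vectors involving only the variables 0..n-1.\<close>

definition poly_no_const :: "nat \<Rightarrow> ((nat \<Rightarrow> nat) \<Rightarrow> 'k::zero) \<Rightarrow> bool" where
  "poly_no_const n c \<longleftrightarrow> finite {e. c e \<noteq> 0} \<and>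
     (\<forall>e. c e \<noteq> 0 \<longrightarrow> e \<noteq> (\<lambda>_. 0) \<and> (\<forall>i\<ge>n. e i = 0))"

definition poly_eval :: "('k::comm_ring_1 \<Rightarrow> 'a::comm_ring \<Rightarrow> 'a) \<Rightarrow> nat \<Rightarrow> ((nat \<Rightarrow> nat) \<Rightarrow> 'k)
    \<Rightarrow> (nat \<Rightarrow> 'a) \<Rightarrow> 'a" where
  "poly_eval sm n c x = (\<Sum>e\<in>{e. c e \<noteq> 0}. sm (c e) (monomial_eval n x e))"

definition SFG :: "('k::comm_ring_1 \<Rightarrow> 'a::comm_ring \<Rightarrow> 'a) \<Rightarrow> 'a set \<Rightarrow> bool" where
  "SFG sm S \<longleftrightarrow> (\<forall>n c x. poly_no_const n c \<and> c \<noteq> (\<lambda>_. 0) \<and>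
      inj_on x {..<n} \<and> x ` {..<n} \<subseteq> S \<longrightarrow> poly_eval sm n c x \<noteq> 0)"

text \<open>Cardinals alpha are represented by sets A (alpha = |A|).\<close>

definition free_subalgebra_card :: "('k::comm_ring_1 \<Rightarrow> 'a::comm_ring \<Rightarrow> 'a) \<Rightarrow> 'c set \<Rightarrow> 'a set \<Rightarrow> bool" where
  "free_subalgebra_card sm A Y \<longleftrightarrow> (\<exists>F. SFG sm F \<and> F \<approx> A \<and> Y = gen_alg sm F)"

definition strongly_dense_algebrable ::
    "('k::comm_ring_1 \<Rightarrow> 'a::{comm_ring,topological_space} \<Rightarrow> 'a) \<Rightarrow> 'c set \<Rightarrow> 'a set \<Rightarrow> bool" where
  "strongly_dense_algebrable sm A M \<longleftrightarrow>
     (\<exists>Y. free_subalgebra_card sm A Y \<and> closure Y = UNIV \<and> Y \<subseteq> M \<union> {0})"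

definition inf_strongly_dense_algebrable ::
    "('k::comm_ring_1 \<Rightarrow> 'a::{comm_ring,topological_space} \<Rightarrow> 'a) \<Rightarrow> 'c set \<Rightarrow> 'a set \<Rightarrow> bool" where
  "inf_strongly_dense_algebrable sm A M \<longleftrightarrow>
     (\<exists>Y :: 'c \<Rightarrow> 'a set.
        (\<forall>\<kappa>\<in>A. free_subalgebra_card sm A (Y \<kappa>) \<and> closure (Y \<kappa>) = UNIV \<and> Y \<kappa> \<subseteq> M \<union> {0}) \<and>
        (\<forall>\<kappa>1\<in>A. \<forall>\<kappa>2\<in>A. \<kappa>1 \<noteq> \<kappa>2 \<longrightarrow> Y \<kappa>1 \<inter> Y \<kappa>2 = {0}))"

definition weight_le :: "'a::topological_space itself \<Rightarrow> 'c set \<Rightarrow> bool" where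
  "weight_le _ A \<longleftrightarrow> (\<exists>B::'a set set. topological_basis B \<and> B \<lesssim> A)"

end

theory Submission
  imports Defs "HOL-Library.Poly_Mapping"
begin

text \<open>Only one direction needs work: from a single dense free subalgebra generated by \<open>F\<close>,
  \<open>|F| = \<alpha>\<close>, build \<open>\<alpha>\<close> pairwise disjoint ones. Enumerate \<open>F\<close> as \<open>\<theta>(n, a)\<close> with
  \<open>n \<in> \<nat>\<close>, \<open>a \<in> A\<close>, and, using \<open>w(X) \<le> \<alpha>\<close>, a base \<open>(\<beta> u)\<close> indexed by \<open>A\<close>. Replace
  the generator \<open>\<theta>(n + 1, b)\<close> by \<open>\<theta>(n, a) + t \<theta>(n + 1, b)\<close>, where \<open>b\<close> codes a triple
  \<open>(a, u, k) \<in> A\<^sup>3\<close> and the scalar \<open>t \<noteq> 0\<close> is so small that the new generator lies in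
  \<open>\<beta> u\<close> whenever \<open>\<theta>(n, a)\<close> does. This substitution is triangular in \<open>n\<close>, hence
  invertible, so the new generators are again free. The generators whose code ends in \<open>k\<close>
  generate the \<open>k\<close>-th subalgebra: these use disjoint sets of free generators, so they meet
  only in \<open>0\<close>, and each of them has a generator in every basic neighbourhood of every
  element of \<open>F\<close>, so each is dense.\<close>

section \<open>Scalar actions\<close>

locale alg_action =
  fixes sm :: "'k::comm_ring_1 \<Rightarrow> 'a::comm_ring \<Rightarrow> 'a"
  assumes sm_add_right: "sm a (x + y) = sm a x + sm a y"
    and sm_add_left: "sm (a + b) x = sm a x + sm b x"
    and sm_sm: "sm a (sm b x) = sm (a * b) x"
    and sm_one: "sm 1 x = x"
    and sm_mult_left: "sm a (x * y) = sm a x * y"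
begin

lemma sm_zero_right: "sm a 0 = 0"
  using sm_add_right[of a 0 0] by simp

lemma sm_zero_left: "sm 0 x = 0"
  using sm_add_left[of 0 0 x] by simp

lemma sm_mult_right: "sm a (x * y) = x * sm a y"
  using sm_mult_left[of a y x] by (simp add: mult.commute)

lemma sm_mult_sm: "sm a x * sm b y = sm (a * b) (x * y)"
  by (metis sm_mult_left sm_mult_right sm_sm)

lemma sm_sum_right: "sm a (sum f S) = (\<Sum>i\<in>S. sm a (f i))"
  by (induction S rule: infinite_finite_induct) (auto simp: sm_zero_right sm_add_right)

end

lemma comm_top_algebra_imp_alg_action: "comm_top_algebra sm \<Longrightarrow> alg_action sm"
  unfolding comm_top_algebra_def alg_action_def by blast

section \<open>Products of non-empty multisets\<close>

text \<open>The product in a possibly non-unital ring; the empty product is the junk value \<open>0\<close>,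
  as for \<open>nprod\<close>.\<close>

definition nprod_mset :: "'a::{ab_semigroup_mult,zero} multiset \<Rightarrow> 'a" where
  "nprod_mset M =
     (if M = {#} then 0 else fold_mset (*) (SOME x. x \<in># M) (M - {#SOME x. x \<in># M#}))"

interpretation mult_fold: comp_fun_commute "(*) :: 'a::ab_semigroup_mult \<Rightarrow> 'a \<Rightarrow> 'a"
  by unfold_locales (auto simp: fun_eq_iff ac_simps)

lemma fold_mset_mult_left: "fold_mset (*) (a * b) N = a * fold_mset (*) (b::'a::ab_semigroup_mult) N"
  by (induction N) (auto simp: ac_simps)

lemma fold_mset_mult_commute:
  "x * fold_mset (*) y N = y * fold_mset (*) (x::'a::ab_semigroup_mult) N"
  by (metis fold_mset_mult_left mult.commute)

lemma nprod_mset_add_mset_fold: "nprod_mset (add_mset x N) = fold_mset (*) x N"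
proof -
  define y where "y = (SOME y. y \<in># add_mset x N)"
  have y: "y \<in># add_mset x N"
    unfolding y_def by (rule someI[of _ x]) simp
  have "nprod_mset (add_mset x N) = fold_mset (*) y (add_mset x N - {#y#})"
    by (simp only: nprod_mset_def y_def[symmetric] add_mset_not_empty if_False)
  also have "\<dots> = fold_mset (*) x N"
  proof (cases "y = x")
    case False
    then obtain N' where "N = add_mset y N'"
      using y by (metis insert_DiffM insert_noteq_member)
    then show ?thesis
      by (simp add: add_mset_commute) (rule fold_mset_mult_commute)
  qed simp
  finally show ?thesis .
qed

lemma nprod_mset_empty [simp]: "nprod_mset {#} = 0"
  by (simp add: nprod_mset_def)

lemma nprod_mset_single [simp]: "nprod_mset {#x#} = x"
  by (simp add: nprod_mset_add_mset_fold)

lemma nprod_mset_union: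
  assumes "M \<noteq> {#}" "N \<noteq> {#}"
  shows "nprod_mset (M + N) = nprod_mset M * nprod_mset N"
proof -
  obtain x M' y N' where M: "M = add_mset x M'" and N: "N = add_mset y N'"
    using assms by (metis multiset_cases)
  have "M + N = add_mset x (M' + N)"
    by (simp add: M)
  then have "nprod_mset (M + N) = fold_mset (*) (fold_mset (*) x M') N"
    by (simp only: nprod_mset_add_mset_fold mult_fold.fold_mset_union)
  also have "\<dots> = fold_mset (*) x M' * fold_mset (*) y N'"
    by (simp add: N) (rule fold_mset_mult_commute)
  finally show ?thesis
    by (simp add: M N nprod_mset_add_mset_fold)
qed

lemma nprod_mset_add_mset: "N \<noteq> {#} \<Longrightarrow> nprod_mset (add_mset x N) = x * nprod_mset N"
  using nprod_mset_union[of "{#x#}" N] by simp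

lemma nprod_mset_closed:
  assumes "\<And>x y. x \<in> D \<Longrightarrow> y \<in> D \<Longrightarrow> x * y \<in> D" "set_mset M \<subseteq> D" "M \<noteq> {#}"
  shows "nprod_mset M \<in> D"
  using assms(2,3)
proof (induction M)
  case (add x M)
  then show ?case
    by (cases "M = {#}") (simp_all add: nprod_mset_add_mset assms(1))
qed simp

lemma nprod_mset_image_mset:
  assumes mult: "\<And>x y. x \<in> D \<Longrightarrow> y \<in> D \<Longrightarrow> T (x * y) = T x * T y"
    and closed: "\<And>x y. x \<in> D \<Longrightarrow> y \<in> D \<Longrightarrow> x * y \<in> D"
    and "set_mset M \<subseteq> D" "M \<noteq> {#}"
  shows "T (nprod_mset M) = nprod_mset (image_mset T M)"
  using assms(3,4)
proof (induction M)
  case (add x M)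
  then show ?case
    by (cases "M = {#}")
      (simp_all add: nprod_mset_add_mset mult nprod_mset_closed[OF closed])
qed simp

lemma nprod_eq_nprod_mset: "nprod xs = nprod_mset (mset xs)"
  by (induction xs rule: nprod.induct) (simp_all add: nprod_mset_add_mset)

section \<open>Polynomials without constant term\<close>

definition poly_smult :: "'k::comm_ring_1 \<Rightarrow> ('v multiset \<Rightarrow>\<^sub>0 'k) \<Rightarrow> ('v multiset \<Rightarrow>\<^sub>0 'k)" where
  "poly_smult a p = Poly_Mapping.single 0 a * p"

definition pvar :: "'v \<Rightarrow> ('v multiset \<Rightarrow>\<^sub>0 'k::comm_ring_1)" where
  "pvar x = Poly_Mapping.single {#x#} 1"

definition ncpolys :: "'v set \<Rightarrow> ('v multiset \<Rightarrow>\<^sub>0 'k::comm_ring_1) set" where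
  "ncpolys S = {p. 0 \<notin> Poly_Mapping.keys p \<and> (\<forall>m\<in>Poly_Mapping.keys p. set_mset m \<subseteq> S)}"

definition peval :: "('k::comm_ring_1 \<Rightarrow> 'a::comm_ring \<Rightarrow> 'a) \<Rightarrow> ('v \<Rightarrow> 'a) \<Rightarrow> ('v multiset \<Rightarrow>\<^sub>0 'k) \<Rightarrow> 'a"
  where
  "peval sm \<phi> p =
     (\<Sum>m\<in>Poly_Mapping.keys p. sm (Poly_Mapping.lookup p m) (nprod_mset (image_mset \<phi> m)))"

lemma poly_mapping_sum_single:
  "p = (\<Sum>m\<in>Poly_Mapping.keys p. Poly_Mapping.single m (Poly_Mapping.lookup p m))"
  by (rule poly_mapping_eqI) (simp add: lookup_sum lookup_single when_def in_keys_iff)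

lemma keys_sum_single_subset:
  "Poly_Mapping.keys (\<Sum>m\<in>K. Poly_Mapping.single (f m) (g m)) \<subseteq> f ` K"
  using keys_sum[of "\<lambda>m. Poly_Mapping.single (f m) (g m)" K] by (auto split: if_splits)

lemma poly_mult_expand:
  "p * q = (\<Sum>m\<in>Poly_Mapping.keys p. \<Sum>n\<in>Poly_Mapping.keys q.
      Poly_Mapping.single (m + n) (Poly_Mapping.lookup p m * Poly_Mapping.lookup q n))"
  by (subst poly_mapping_sum_single[of p], subst poly_mapping_sum_single[of q])
    (simp add: sum_product mult_single)

lemma keys_mult_subset:
  "Poly_Mapping.keys (p * q) \<subseteq> {m + n |m n. m \<in> Poly_Mapping.keys p \<and> n \<in> Poly_Mapping.keys q}"
proof -
  have "Poly_Mapping.keys (p * q) \<subseteq> (\<Union>m\<in>Poly_Mapping.keys p. (+) m ` Poly_Mapping.keys q)"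
    by (subst poly_mult_expand) (rule order_trans[OF keys_sum UN_mono[OF order_refl keys_sum_single_subset]])
  then show ?thesis by blast
qed

lemma poly_smult_expand:
  "poly_smult a p =
     (\<Sum>m\<in>Poly_Mapping.keys p. Poly_Mapping.single m (a * Poly_Mapping.lookup p m))"
  unfolding poly_smult_def
  by (subst poly_mapping_sum_single[of p]) (simp add: sum_distrib_left mult_single)

lemma keys_poly_smult_subset: "Poly_Mapping.keys (poly_smult a p) \<subseteq> Poly_Mapping.keys p"
  unfolding poly_smult_expand using keys_sum_single_subset[of id] by simp

interpretation poly_action: alg_action "poly_smult :: 'k::comm_ring_1 \<Rightarrow> ('v multiset \<Rightarrow>\<^sub>0 'k) \<Rightarrow> _"
  by unfold_locales
    (auto simp: poly_smult_def algebra_simps single_add mult_single simp flip: mult.assoc)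

lemma pvar_inject [simp]: "(pvar x :: 'v multiset \<Rightarrow>\<^sub>0 'k::comm_ring_1) = pvar y \<longleftrightarrow> x = y"
proof
  assume "(pvar x :: 'v multiset \<Rightarrow>\<^sub>0 'k) = pvar y"
  then have "Poly_Mapping.lookup (pvar x :: 'v multiset \<Rightarrow>\<^sub>0 'k) {#x#} =
      Poly_Mapping.lookup (pvar y) {#x#}"
    by simp
  then show "x = y"
    by (simp add: pvar_def lookup_single when_def split: if_splits)
qed simp

lemma nprod_mset_image_pvar:
  "m \<noteq> {#} \<Longrightarrow> nprod_mset (image_mset pvar m) = (Poly_Mapping.single m 1 :: 'v multiset \<Rightarrow>\<^sub>0 'k::comm_ring_1)"
proof (induction m)
  case (add x m)
  then show ?case
    by (cases "m = {#}") (simp_all add: nprod_mset_add_mset pvar_def mult_single)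
qed simp

lemma ncpolys_zero [simp]: "0 \<in> ncpolys S"
  by (simp add: ncpolys_def)

lemma ncpolys_add: "p \<in> ncpolys S \<Longrightarrow> q \<in> ncpolys S \<Longrightarrow> p + q \<in> ncpolys S"
  unfolding ncpolys_def using keys_add[of p q] by blast

lemma ncpolys_diff: "p \<in> ncpolys S \<Longrightarrow> q \<in> ncpolys S \<Longrightarrow> p - q \<in> ncpolys S"
  unfolding ncpolys_def using keys_diff[of p q] by blast

lemma ncpolys_smult: "p \<in> ncpolys S \<Longrightarrow> poly_smult a p \<in> ncpolys S"
  unfolding ncpolys_def using keys_poly_smult_subset by blast

lemma ncpolys_mult: "p \<in> ncpolys S \<Longrightarrow> q \<in> ncpolys S \<Longrightarrow> p * q \<in> ncpolys S"
  unfolding ncpolys_def using keys_mult_subset[of p q] by fastforce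

lemma ncpolys_pvar: "x \<in> S \<Longrightarrow> pvar x \<in> ncpolys S"
  unfolding ncpolys_def pvar_def by simp

lemma ncpolys_mono: "S \<subseteq> T \<Longrightarrow> ncpolys S \<subseteq> ncpolys T"
  unfolding ncpolys_def by blast

lemma is_subalgebra_ncpolys: "is_subalgebra poly_smult (ncpolys S)"
  unfolding is_subalgebra_def by (auto intro: ncpolys_add ncpolys_mult ncpolys_smult)

lemma is_subalgebra_sum: "is_subalgebra sm Z \<Longrightarrow> (\<And>i. i \<in> K \<Longrightarrow> f i \<in> Z) \<Longrightarrow> sum f K \<in> Z"
  unfolding is_subalgebra_def by (induction K rule: infinite_finite_induct) auto

lemma peval_cong:
  "(\<And>m x. m \<in> Poly_Mapping.keys p \<Longrightarrow> x \<in># m \<Longrightarrow> \<phi> x = \<psi> x) \<Longrightarrow> peval sm \<phi> p = peval sm \<psi> p"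
  unfolding peval_def
  by (intro sum.cong refl arg_cong[where f="sm _"] arg_cong[where f=nprod_mset] image_mset_cong) auto

lemma hom_peval:
  fixes T :: "'a::comm_ring \<Rightarrow> 'b::comm_ring"
    and sm1 :: "'k::comm_ring_1 \<Rightarrow> 'a \<Rightarrow> 'a" and sm2 :: "'k \<Rightarrow> 'b \<Rightarrow> 'b"
  assumes add: "\<And>x y. T (x + y) = T x + T y"
    and smult: "\<And>a x. x \<in> D \<Longrightarrow> T (sm1 a x) = sm2 a (T x)"
    and mult: "\<And>x y. x \<in> D \<Longrightarrow> y \<in> D \<Longrightarrow> T (x * y) = T x * T y"
    and closed: "\<And>x y. x \<in> D \<Longrightarrow> y \<in> D \<Longrightarrow> x * y \<in> D"
    and vars: "\<And>m x. m \<in> Poly_Mapping.keys p \<Longrightarrow> x \<in># m \<Longrightarrow> \<phi> x \<in> D"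
    and no_const: "0 \<notin> Poly_Mapping.keys p"
  shows "T (peval sm1 \<phi> p) = peval sm2 (T \<circ> \<phi>) p"
proof -
  have T0: "T 0 = 0"
    using add[of 0 0] by simp
  have "T (sm1 (Poly_Mapping.lookup p m) (nprod_mset (image_mset \<phi> m))) =
      sm2 (Poly_Mapping.lookup p m) (nprod_mset (image_mset (T \<circ> \<phi>) m))"
    if m: "m \<in> Poly_Mapping.keys p" for m
  proof -
    have "image_mset \<phi> m \<noteq> {#}" "set_mset (image_mset \<phi> m) \<subseteq> D"
      using m no_const vars by auto
    then show ?thesis
      by (simp add: smult nprod_mset_closed[OF closed] nprod_mset_image_mset[OF mult closed]
          multiset.map_comp)
  qed
  then show ?thesis
    unfolding peval_def by (simp add: sum_comp_morphism[OF T0 add, symmetric])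
qed

lemma peval_pvar_self: "0 \<notin> Poly_Mapping.keys q \<Longrightarrow> peval poly_smult pvar q = q"
  unfolding peval_def
proof (subst (2) poly_mapping_sum_single, intro sum.cong refl)
  fix m assume "0 \<notin> Poly_Mapping.keys q" "m \<in> Poly_Mapping.keys q"
  then have "m \<noteq> {#}" by auto
  then show "poly_smult (Poly_Mapping.lookup q m) (nprod_mset (image_mset pvar m)) =
      Poly_Mapping.single m (Poly_Mapping.lookup q m)"
    by (simp add: nprod_mset_image_pvar poly_smult_def mult_single)
qed

context alg_action
begin

lemma peval_superset:
  assumes "finite K" "Poly_Mapping.keys p \<subseteq> K"
  shows "peval sm \<phi> p = (\<Sum>m\<in>K. sm (Poly_Mapping.lookup p m) (nprod_mset (image_mset \<phi> m)))"
  unfolding peval_def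
  by (rule sum.mono_neutral_left) (use assms in \<open>auto simp: sm_zero_left in_keys_iff\<close>)

lemma peval_add: "peval sm \<phi> (p + q) = peval sm \<phi> p + peval sm \<phi> q"
proof -
  let ?K = "Poly_Mapping.keys p \<union> Poly_Mapping.keys q"
  show ?thesis
    using peval_superset[of ?K "p + q"] peval_superset[of ?K p] peval_superset[of ?K q] keys_add[of p q]
    by (simp add: lookup_add sm_add_left sum.distrib)
qed

lemma peval_zero [simp]: "peval sm \<phi> 0 = 0"
  by (simp add: peval_def)

lemma peval_diff: "peval sm \<phi> (p - q) = peval sm \<phi> p - peval sm \<phi> q"
  using peval_add[of \<phi> "p - q" q] by (simp add: eq_diff_eq)

lemma peval_sum: "peval sm \<phi> (sum f K) = (\<Sum>i\<in>K. peval sm \<phi> (f i))"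
  by (rule sum_comp_morphism[OF peval_zero peval_add, symmetric, unfolded comp_def])

lemma peval_single: "peval sm \<phi> (Poly_Mapping.single m a) = sm a (nprod_mset (image_mset \<phi> m))"
  by (cases "a = 0") (simp_all add: peval_def sm_zero_left)

lemma peval_pvar: "peval sm \<phi> (pvar x) = \<phi> x"
  by (simp add: pvar_def peval_single sm_one)

lemma peval_smult: "peval sm \<phi> (poly_smult a p) = sm a (peval sm \<phi> p)"
  by (simp add: poly_smult_expand peval_sum peval_single) (simp add: peval_def sm_sum_right sm_sm)

lemma peval_mult:
  assumes "0 \<notin> Poly_Mapping.keys p" "0 \<notin> Poly_Mapping.keys q"
  shows "peval sm \<phi> (p * q) = peval sm \<phi> p * peval sm \<phi> q"
proof -
  have "peval sm \<phi> (p * q) =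
      (\<Sum>m\<in>Poly_Mapping.keys p. \<Sum>n\<in>Poly_Mapping.keys q.
         sm (Poly_Mapping.lookup p m * Poly_Mapping.lookup q n) (nprod_mset (image_mset \<phi> (m + n))))"
    by (simp add: poly_mult_expand peval_sum peval_single)
  also have "\<dots> = (\<Sum>m\<in>Poly_Mapping.keys p. \<Sum>n\<in>Poly_Mapping.keys q.
      sm (Poly_Mapping.lookup p m) (nprod_mset (image_mset \<phi> m)) *
      sm (Poly_Mapping.lookup q n) (nprod_mset (image_mset \<phi> n)))"
  proof (intro sum.cong refl)
    fix m n assume "m \<in> Poly_Mapping.keys p" "n \<in> Poly_Mapping.keys q"
    then have "m \<noteq> {#}" "n \<noteq> {#}"
      using assms by auto
    then show "sm (Poly_Mapping.lookup p m * Poly_Mapping.lookup q n) (nprod_mset (image_mset \<phi> (m + n))) =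
        sm (Poly_Mapping.lookup p m) (nprod_mset (image_mset \<phi> m)) *
        sm (Poly_Mapping.lookup q n) (nprod_mset (image_mset \<phi> n))"
      by (simp add: nprod_mset_union sm_mult_sm)
  qed
  also have "\<dots> = peval sm \<phi> p * peval sm \<phi> q"
    by (simp add: peval_def sum_product)
  finally show ?thesis .
qed

lemma peval_in_subalgebra:
  assumes Z: "is_subalgebra sm Z" and p: "p \<in> ncpolys S" and \<phi>: "\<phi> ` S \<subseteq> Z"
  shows "peval sm \<phi> p \<in> Z"
  unfolding peval_def
proof (rule is_subalgebra_sum[OF Z])
  fix m assume m: "m \<in> Poly_Mapping.keys p"
  have "image_mset \<phi> m \<noteq> {#}" "set_mset (image_mset \<phi> m) \<subseteq> Z"
    using m p \<phi> by (auto simp: ncpolys_def)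
  then have "nprod_mset (image_mset \<phi> m) \<in> Z"
    using Z by (intro nprod_mset_closed) (auto simp: is_subalgebra_def)
  then show "sm (Poly_Mapping.lookup p m) (nprod_mset (image_mset \<phi> m)) \<in> Z"
    using Z by (auto simp: is_subalgebra_def)
qed

lemma peval_peval:
  assumes "0 \<notin> Poly_Mapping.keys q"
    and "\<And>m x. m \<in> Poly_Mapping.keys q \<Longrightarrow> x \<in># m \<Longrightarrow> r x \<in> ncpolys UNIV"
  shows "peval sm \<psi> (peval poly_smult r q) = peval sm (peval sm \<psi> \<circ> r) q"
proof (rule hom_peval[where D = "ncpolys UNIV"])
  show "peval sm \<psi> (p * p') = peval sm \<psi> p * peval sm \<psi> p'"
    if "p \<in> ncpolys UNIV" "p' \<in> ncpolys UNIV" for p p'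
    using that by (intro peval_mult) (auto simp: ncpolys_def)
qed (use assms in \<open>auto simp: peval_add peval_smult ncpolys_mult\<close>)

end

lemma peval_rename_left_inverse:
  assumes "0 \<notin> Poly_Mapping.keys q"
    and "\<And>m y. m \<in> Poly_Mapping.keys q \<Longrightarrow> y \<in># m \<Longrightarrow> g (g' y) = y"
  shows "peval poly_smult (pvar \<circ> g) (peval poly_smult (pvar \<circ> g') q) = (q :: 'a multiset \<Rightarrow>\<^sub>0 'k::comm_ring_1)"
proof -
  have "peval poly_smult (pvar \<circ> g) (peval poly_smult (pvar \<circ> g') q) =
      peval poly_smult (peval poly_smult (pvar \<circ> g) \<circ> (pvar \<circ> g')) q"
    by (rule poly_action.peval_peval[OF assms(1)]) (simp add: ncpolys_pvar)
  also have "\<dots> = peval poly_smult pvar q"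
    using assms(2) by (intro peval_cong) (simp add: poly_action.peval_pvar)
  also have "\<dots> = q"
    by (rule peval_pvar_self[OF assms(1)])
  finally show ?thesis .
qed

section \<open>Algebraically independent sets\<close>

lemma gen_alg_superset: "S \<subseteq> gen_alg sm S"
  unfolding gen_alg_def by blast

lemma is_subalgebra_gen_alg: "is_subalgebra sm (gen_alg sm S)"
  unfolding gen_alg_def is_subalgebra_def by blast

lemma gen_alg_minimal: "is_subalgebra sm T \<Longrightarrow> S \<subseteq> T \<Longrightarrow> gen_alg sm S \<subseteq> T"
  unfolding gen_alg_def by blast

definition alg_indep :: "('k::comm_ring_1 \<Rightarrow> 'a::comm_ring \<Rightarrow> 'a) \<Rightarrow> 'a set \<Rightarrow> bool" where
  "alg_indep sm S \<longleftrightarrow> (\<forall>p \<in> ncpolys S. peval sm id p = (0::'a) \<longrightarrow> p = (0 :: 'a multiset \<Rightarrow>\<^sub>0 'k))"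

lemma alg_indep_subset: "alg_indep sm S \<Longrightarrow> T \<subseteq> S \<Longrightarrow> alg_indep sm T"
  unfolding alg_indep_def using ncpolys_mono by blast

context alg_action
begin

lemma peval_in_gen_alg: "p \<in> ncpolys S \<Longrightarrow> peval sm id p \<in> gen_alg sm S"
  by (rule peval_in_subalgebra[OF is_subalgebra_gen_alg]) (auto intro: gen_alg_superset[THEN subsetD])

lemma gen_alg_subset_peval_image: "gen_alg sm S \<subseteq> peval sm id ` ncpolys S"
proof (rule gen_alg_minimal)
  show "S \<subseteq> peval sm id ` ncpolys S"
    by (metis id_apply image_eqI ncpolys_pvar peval_pvar subsetI)
  show "is_subalgebra sm (peval sm id ` ncpolys S)"
    unfolding is_subalgebra_def
  proof (intro conjI ballI allI)
    show "0 \<in> peval sm id ` ncpolys S"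
      by (rule image_eqI[where x = 0]) simp_all
    fix x y assume "x \<in> peval sm id ` ncpolys S" "y \<in> peval sm id ` ncpolys S"
    then obtain p q where p: "p \<in> ncpolys S" "x = peval sm id p" and q: "q \<in> ncpolys S" "y = peval sm id q"
      by blast
    have "x + y = peval sm id (p + q)"
      using p q by (simp add: peval_add)
    then show "x + y \<in> peval sm id ` ncpolys S"
      using ncpolys_add[OF p(1) q(1)] by blast
    have "x * y = peval sm id (p * q)"
      using p q by (simp add: peval_mult ncpolys_def)
    then show "x * y \<in> peval sm id ` ncpolys S"
      using ncpolys_mult[OF p(1) q(1)] by blast
  next
    fix a x assume "x \<in> peval sm id ` ncpolys S"
    then obtain p where "p \<in> ncpolys S" "x = peval sm id p"
      by blast
    then show "sm a x \<in> peval sm id ` ncpolys S"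
      using ncpolys_smult by (metis image_eqI peval_smult)
  qed
qed

lemma alg_indep_peval_inj:
  "alg_indep sm F \<Longrightarrow> p \<in> ncpolys F \<Longrightarrow> q \<in> ncpolys F \<Longrightarrow> peval sm id p = peval sm id q \<Longrightarrow> p = q"
  unfolding alg_indep_def using ncpolys_diff[of p F q] peval_diff[of id p q] by auto

lemma gen_alg_Int_gen_alg:
  assumes indep: "alg_indep sm S" and "S1 \<subseteq> S" "S2 \<subseteq> S" "S1 \<inter> S2 = {}"
  shows "gen_alg sm S1 \<inter> gen_alg sm S2 = {0}"
proof -
  have "y = 0" if y: "y \<in> gen_alg sm S1" "y \<in> gen_alg sm S2" for y
  proof -
    obtain p1 p2 where p1: "p1 \<in> ncpolys S1" "y = peval sm id p1"
      and p2: "p2 \<in> ncpolys S2" "y = peval sm id p2"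
      using y gen_alg_subset_peval_image by blast
    have "p1 = p2"
      using p1 p2 assms(2,3) ncpolys_mono by (intro alg_indep_peval_inj[OF indep]) blast+
    have "Poly_Mapping.keys p1 = {}"
    proof (rule ccontr)
      assume "Poly_Mapping.keys p1 \<noteq> {}"
      then obtain m where "m \<in> Poly_Mapping.keys p1" by blast
      then have "set_mset m \<subseteq> S1" "set_mset m \<subseteq> S2" "m \<noteq> {#}"
        using p1(1) p2(1) \<open>p1 = p2\<close> unfolding ncpolys_def by auto
      then show False using assms(4) by (metis disjoint_iff multiset_nonemptyE subsetD)
    qed
    then show "y = 0" using p1 by simp
  qed
  moreover have "0 \<in> gen_alg sm S1 \<inter> gen_alg sm S2"
    using is_subalgebra_gen_alg unfolding is_subalgebra_def by blast
  ultimately show ?thesis by blast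
qed

lemma inj_on_of_substitution:
  assumes indep: "alg_indep sm F"
    and r_polys: "\<And>j. j \<in> J \<Longrightarrow> r j \<in> ncpolys F"
    and r_eval: "\<And>j. j \<in> J \<Longrightarrow> peval sm id (r j) = g j"
    and s: "\<And>j. j \<in> J \<Longrightarrow> peval poly_smult s (r j) = (pvar j :: 'j multiset \<Rightarrow>\<^sub>0 'k)"
  shows "inj_on g J"
proof (rule inj_onI)
  fix i j assume "i \<in> J" "j \<in> J" "g i = g j"
  then have "r i = r j"
    by (intro alg_indep_peval_inj[OF indep]) (simp_all add: r_polys r_eval)
  then have "(pvar i :: 'j multiset \<Rightarrow>\<^sub>0 'k) = pvar j"
    using s \<open>i \<in> J\<close> \<open>j \<in> J\<close> by metis
  then show "i = j" by simp
qed

text \<open>If the generators \<open>g j\<close> are polynomials \<open>r j\<close> in an independent set \<open>F\<close>, and some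
  substitution \<open>s\<close> of the elements of \<open>F\<close> turns each \<open>r j\<close> back into the variable \<open>j\<close>, then
  the \<open>g j\<close> are independent: a relation among them would be carried by \<open>r\<close> to a relation
  over \<open>F\<close>, which is trivial, and then by \<open>s\<close> back to the original relation.\<close>

lemma alg_indep_of_substitution:
  assumes indep: "alg_indep sm F"
    and r_polys: "\<And>j. j \<in> J \<Longrightarrow> r j \<in> ncpolys F"
    and r_eval: "\<And>j. j \<in> J \<Longrightarrow> peval sm id (r j) = g j"
    and s: "\<And>j. j \<in> J \<Longrightarrow> peval poly_smult s (r j) = (pvar j :: 'j multiset \<Rightarrow>\<^sub>0 'k)"
  shows "alg_indep sm (g ` J)"
  unfolding alg_indep_def
proof (intro ballI impI)
  fix q :: "'a multiset \<Rightarrow>\<^sub>0 'k"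
  assume q: "q \<in> ncpolys (g ` J)" and q_eval: "peval sm id q = 0"
  define g' where "g' = inv_into J g"
  have no_const: "0 \<notin> Poly_Mapping.keys q"
    and vars: "\<And>m y. m \<in> Poly_Mapping.keys q \<Longrightarrow> y \<in># m \<Longrightarrow> y \<in> g ` J"
    using q by (auto simp: ncpolys_def)
  have g': "g' y \<in> J" "g (g' y) = y" if "y \<in> g ` J" for y
    using that unfolding g'_def by (auto intro: inv_into_into f_inv_into_f)
  have subst_polys: "r (g' y) \<in> ncpolys F" if "y \<in> g ` J" for y
    using r_polys g'(1)[OF that] .
  then have vars_subst: "r (g' y) \<in> ncpolys UNIV" if "m \<in> Poly_Mapping.keys q" "y \<in># m" for m y
    using that vars ncpolys_mono[of F UNIV] by blast
  define q' where "q' = peval poly_smult (r \<circ> g') q"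
  have "q' \<in> ncpolys F"
    unfolding q'_def using subst_polys
    by (intro poly_action.peval_in_subalgebra[OF is_subalgebra_ncpolys q]) auto
  moreover have "peval sm id q' = peval sm (peval sm id \<circ> (r \<circ> g')) q"
    unfolding q'_def using vars_subst by (intro peval_peval[OF no_const]) auto
  moreover have "\<dots> = peval sm id q"
    using g' vars by (intro peval_cong) (simp add: r_eval)
  ultimately have "q' = 0"
    using indep q_eval unfolding alg_indep_def by auto
  have "peval poly_smult s q' = peval poly_smult (peval poly_smult s \<circ> (r \<circ> g')) q"
    unfolding q'_def using vars_subst by (intro poly_action.peval_peval[OF no_const]) auto
  also have "\<dots> = peval poly_smult (pvar \<circ> g') q"
    using g' vars by (intro peval_cong) (simp add: s)
  finally have "peval poly_smult (pvar \<circ> g') q = 0"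
    using \<open>q' = 0\<close> by simp
  then show "q = 0"
    using peval_rename_left_inverse[OF no_const, of g g'] g' vars by simp
qed

end

definition exp_mset :: "nat \<Rightarrow> (nat \<Rightarrow> 'a) \<Rightarrow> (nat \<Rightarrow> nat) \<Rightarrow> 'a multiset" where
  "exp_mset n x e = (\<Sum>i<n. replicate_mset (e i) (x i))"

definition poly_of_coeffs :: "nat \<Rightarrow> (nat \<Rightarrow> 'a) \<Rightarrow> ((nat \<Rightarrow> nat) \<Rightarrow> 'k::comm_ring_1) \<Rightarrow> ('a multiset \<Rightarrow>\<^sub>0 'k)"
  where "poly_of_coeffs n x c = (\<Sum>e\<in>{e. c e \<noteq> 0}. Poly_Mapping.single (exp_mset n x e) (c e))"

lemma monomial_eval_eq_nprod_mset: "monomial_eval n x e = nprod_mset (exp_mset n x e)"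
proof -
  have "mset (concat (map (\<lambda>i. replicate (e i) (x i)) [0..<n])) = exp_mset n x e"
    unfolding exp_mset_def by (induction n) auto
  then show ?thesis
    unfolding monomial_eval_def by (simp add: nprod_eq_nprod_mset)
qed

lemma count_exp_mset:
  assumes "inj_on x {..<n}" "i < n"
  shows "count (exp_mset n x e) (x i) = e i"
proof -
  have "count (exp_mset n x e) (x i) = (\<Sum>j<n. if j = i then e j else 0)"
    unfolding exp_mset_def count_sum
    by (intro sum.cong refl) (use assms in \<open>auto simp: inj_on_def\<close>)
  also have "\<dots> = e i"
    using assms(2) by simp
  finally show ?thesis .
qed

lemma set_exp_mset_subset: "set_mset (exp_mset n x e) \<subseteq> x ` {..<n}"
  unfolding exp_mset_def by (auto simp: set_mset_sum split: if_splits)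

lemma exp_mset_inject:
  assumes "inj_on x {..<n}" "\<forall>i\<ge>n. e i = 0" "\<forall>i\<ge>n. e' i = 0"
  shows "exp_mset n x e = exp_mset n x e' \<longleftrightarrow> e = e'"
proof
  assume eq: "exp_mset n x e = exp_mset n x e'"
  show "e = e'"
  proof
    fix i show "e i = e' i"
      using count_exp_mset[OF assms(1), of i e] count_exp_mset[OF assms(1), of i e'] eq assms(2,3)
      by (cases "i < n") auto
  qed
qed simp

lemma exp_mset_eq_empty_iff:
  assumes "\<forall>i\<ge>n. e i = 0"
  shows "exp_mset n x e = {#} \<longleftrightarrow> e = (\<lambda>_. 0)"
proof
  assume "exp_mset n x e = {#}"
  moreover have "x i \<in># exp_mset n x e" if "i < n" "e i \<noteq> 0" for i
    using that by (auto simp: exp_mset_def set_mset_sum)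
  ultimately have "e i = 0" if "i < n" for i
    using that by fastforce
  then show "e = (\<lambda>_. 0)"
    using assms by (metis not_le)
qed (simp add: exp_mset_def)

definition exp_of_mset :: "nat \<Rightarrow> (nat \<Rightarrow> 'a) \<Rightarrow> 'a multiset \<Rightarrow> nat \<Rightarrow> nat" where
  "exp_of_mset n x m i = (if i < n then count m (x i) else 0)"

lemma exp_mset_exp_of_mset:
  assumes "inj_on x {..<n}" "set_mset m \<subseteq> x ` {..<n}"
  shows "exp_mset n x (exp_of_mset n x m) = m"
proof (rule multiset_eqI)
  fix y show "count (exp_mset n x (exp_of_mset n x m)) y = count m y"
  proof (cases "y \<in> x ` {..<n}")
    case True
    then show ?thesis using count_exp_mset[OF assms(1)] by (auto simp: exp_of_mset_def)
  next
    case False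
    then show ?thesis
      using assms(2) set_exp_mset_subset by (metis count_eq_zero_iff subsetD)
  qed
qed

lemma exp_of_mset_exp_mset:
  "inj_on x {..<n} \<Longrightarrow> \<forall>i\<ge>n. e i = 0 \<Longrightarrow> exp_of_mset n x (exp_mset n x e) = e"
  by (auto simp: exp_of_mset_def count_exp_mset)

lemma poly_of_coeffs_in_ncpolys:
  assumes "poly_no_const n c" "x ` {..<n} \<subseteq> S"
  shows "poly_of_coeffs n x c \<in> ncpolys S"
proof -
  have keys: "Poly_Mapping.keys (poly_of_coeffs n x c) \<subseteq> exp_mset n x ` {e. c e \<noteq> 0}"
    unfolding poly_of_coeffs_def by (rule keys_sum_single_subset)
  show ?thesis
    unfolding ncpolys_def
  proof (intro CollectI conjI ballI)
    show "0 \<notin> Poly_Mapping.keys (poly_of_coeffs n x c)"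
    proof
      assume "0 \<in> Poly_Mapping.keys (poly_of_coeffs n x c)"
      then obtain e where "c e \<noteq> 0" "exp_mset n x e = {#}"
        using keys by auto
      moreover from this(1) have "e \<noteq> (\<lambda>_. 0)" "\<forall>i\<ge>n. e i = 0"
        using assms(1) unfolding poly_no_const_def by blast+
      ultimately show False
        by (simp add: exp_mset_eq_empty_iff)
    qed
    show "set_mset m \<subseteq> S" if m: "m \<in> Poly_Mapping.keys (poly_of_coeffs n x c)" for m
    proof -
      obtain e where "m = exp_mset n x e"
        using m keys by auto
      then show ?thesis
        using set_exp_mset_subset assms(2) by (metis order_trans)
    qed
  qed
qed

lemma poly_of_coeffs_eq_0_iff:
  assumes "poly_no_const n c" "inj_on x {..<n}"
  shows "poly_of_coeffs n x c = 0 \<longleftrightarrow> c = (\<lambda>_. 0)"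
proof
  assume p0: "poly_of_coeffs n x c = 0"
  show "c = (\<lambda>_. 0)"
  proof (rule ccontr)
    assume "c \<noteq> (\<lambda>_. 0)"
    then obtain e0 where e0: "c e0 \<noteq> 0" by auto
    have supp: "\<forall>i\<ge>n. e i = 0" if "c e \<noteq> 0" for e
      using that assms(1) unfolding poly_no_const_def by blast
    have "Poly_Mapping.lookup (poly_of_coeffs n x c) (exp_mset n x e0) =
        (\<Sum>e\<in>{e. c e \<noteq> 0}. if e = e0 then c e else 0)"
      unfolding poly_of_coeffs_def lookup_sum lookup_single
      using exp_mset_inject[OF assms(2) supp supp] e0 by (intro sum.cong refl) (auto simp: when_def)
    also have "\<dots> = c e0"
      using assms(1) e0 unfolding poly_no_const_def by simp
    finally show False
      using p0 e0 by simp
  qed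
qed (simp add: poly_of_coeffs_def)

definition coeffs_of :: "nat \<Rightarrow> (nat \<Rightarrow> 'a) \<Rightarrow> ('a multiset \<Rightarrow>\<^sub>0 'k::comm_ring_1) \<Rightarrow> (nat \<Rightarrow> nat) \<Rightarrow> 'k"
  where "coeffs_of n x p e = (if \<forall>i\<ge>n. e i = 0 then Poly_Mapping.lookup p (exp_mset n x e) else 0)"

context
  fixes n :: nat and x :: "nat \<Rightarrow> 'a" and p :: "'a multiset \<Rightarrow>\<^sub>0 'k::comm_ring_1"
  assumes inj: "inj_on x {..<n}"
    and vars: "\<And>m. m \<in> Poly_Mapping.keys p \<Longrightarrow> set_mset m \<subseteq> x ` {..<n}"
begin

lemma exp_mset_exp_of_mset_keys: "m \<in> Poly_Mapping.keys p \<Longrightarrow> exp_mset n x (exp_of_mset n x m) = m"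
  by (rule exp_mset_exp_of_mset[OF inj vars])

lemma coeffs_of_support: "{e. coeffs_of n x p e \<noteq> 0} = exp_of_mset n x ` Poly_Mapping.keys p"
proof (intro equalityI subsetI)
  fix e assume "e \<in> {e. coeffs_of n x p e \<noteq> 0}"
  then have "\<forall>i\<ge>n. e i = 0" "exp_mset n x e \<in> Poly_Mapping.keys p"
    by (auto simp: coeffs_of_def in_keys_iff split: if_splits)
  then show "e \<in> exp_of_mset n x ` Poly_Mapping.keys p"
    by (metis exp_of_mset_exp_mset[OF inj] image_eqI)
qed (auto simp: coeffs_of_def in_keys_iff exp_of_mset_def exp_mset_exp_of_mset_keys)

lemma poly_no_const_coeffs_of:
  assumes "0 \<notin> Poly_Mapping.keys p"
  shows "poly_no_const n (coeffs_of n x p)"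
  unfolding poly_no_const_def
proof
  show "finite {e. coeffs_of n x p e \<noteq> 0}"
    unfolding coeffs_of_support by simp
  show "\<forall>e. coeffs_of n x p e \<noteq> 0 \<longrightarrow> e \<noteq> (\<lambda>_. 0) \<and> (\<forall>i\<ge>n. e i = 0)"
  proof (intro allI impI)
    fix e assume ce: "coeffs_of n x p e \<noteq> 0"
    have "e \<noteq> (\<lambda>_. 0)"
    proof
      assume "e = (\<lambda>_. 0)"
      then have "0 \<in> Poly_Mapping.keys p"
        using ce by (simp add: coeffs_of_def exp_mset_def in_keys_iff)
      then show False
        using assms by simp
    qed
    moreover have "\<forall>i\<ge>n. e i = 0"
      using ce by (auto simp: coeffs_of_def split: if_splits)
    ultimately show "e \<noteq> (\<lambda>_. 0) \<and> (\<forall>i\<ge>n. e i = 0)" ..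
  qed
qed

lemma poly_of_coeffs_coeffs_of: "poly_of_coeffs n x (coeffs_of n x p) = p"
proof -
  have "inj_on (exp_of_mset n x) (Poly_Mapping.keys p)"
    using exp_mset_exp_of_mset_keys by (metis inj_on_inverseI)
  then have "poly_of_coeffs n x (coeffs_of n x p) = (\<Sum>m\<in>Poly_Mapping.keys p.
      Poly_Mapping.single (exp_mset n x (exp_of_mset n x m)) (coeffs_of n x p (exp_of_mset n x m)))"
    unfolding poly_of_coeffs_def coeffs_of_support by (rule sum.reindex[unfolded comp_def])
  also have "\<dots> = (\<Sum>m\<in>Poly_Mapping.keys p. Poly_Mapping.single m (Poly_Mapping.lookup p m))"
    by (intro sum.cong refl) (simp add: exp_mset_exp_of_mset_keys coeffs_of_def exp_of_mset_def)
  finally show ?thesis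
    using poly_mapping_sum_single[of p] by simp
qed

end

lemma ncpolys_obtain_coeffs:
  assumes p: "p \<in> ncpolys S"
  obtains n x c where "poly_no_const n c" "inj_on x {..<n}" "x ` {..<n} \<subseteq> S"
    "p = poly_of_coeffs n x c"
proof -
  define V where "V = (\<Union>m\<in>Poly_Mapping.keys p. set_mset m)"
  have "finite V"
    by (simp add: V_def)
  then obtain n :: nat and x where "V = x ` {i. i < n}" "inj_on x {i. i < n}"
    using finite_imp_nat_seg_image_inj_on by blast
  then have V: "V = x ` {..<n}" and inj: "inj_on x {..<n}"
    by (simp_all add: lessThan_def)
  have vars: "set_mset m \<subseteq> x ` {..<n}" if "m \<in> Poly_Mapping.keys p" for m
    using that V by (auto simp: V_def)
  show ?thesis
  proof (rule that)
    show "poly_no_const n (coeffs_of n x p)"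
      using p by (intro poly_no_const_coeffs_of[OF inj vars]) (auto simp: ncpolys_def)
    show "p = poly_of_coeffs n x (coeffs_of n x p)"
      by (rule poly_of_coeffs_coeffs_of[OF inj vars, symmetric])
    show "x ` {..<n} \<subseteq> S"
      using p V by (auto simp: V_def ncpolys_def)
  qed (rule inj)
qed

lemma (in alg_action) poly_eval_eq_peval:
  "poly_eval sm n (c :: (nat \<Rightarrow> nat) \<Rightarrow> 'k) x = peval sm id (poly_of_coeffs n x c)"
  unfolding poly_eval_def poly_of_coeffs_def
  by (simp add: peval_sum peval_single monomial_eval_eq_nprod_mset)

lemma (in alg_action) SFG_iff_alg_indep: "SFG sm S \<longleftrightarrow> alg_indep sm S"
proof
  assume SFG: "SFG sm S"
  show "alg_indep sm S"
    unfolding alg_indep_def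
  proof (intro ballI impI)
    fix p :: "'a multiset \<Rightarrow>\<^sub>0 'k"
    assume p: "p \<in> ncpolys S" and p_eval: "peval sm id p = 0"
    obtain n x c where c: "poly_no_const n c" and x: "inj_on x {..<n}" "x ` {..<n} \<subseteq> S"
      and p_eq: "p = poly_of_coeffs n x c"
      using ncpolys_obtain_coeffs[OF p] .
    have "poly_eval sm n c x = 0"
      using p_eval by (simp add: p_eq poly_eval_eq_peval)
    then have "c = (\<lambda>_. 0)"
      using SFG_def[THEN iffD1, OF SFG, rule_format, of n c x] c x by blast
    then show "p = 0"
      by (simp add: p_eq poly_of_coeffs_def)
  qed
next
  assume indep: "alg_indep sm S"
  show "SFG sm S"
    unfolding SFG_def
  proof (intro allI impI)
    fix n and c :: "(nat \<Rightarrow> nat) \<Rightarrow> 'k" and x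
    assume "poly_no_const n c \<and> c \<noteq> (\<lambda>_. 0) \<and> inj_on x {..<n} \<and> x ` {..<n} \<subseteq> S"
    then have "poly_of_coeffs n x c \<in> ncpolys S" "poly_of_coeffs n x c \<noteq> 0"
      by (simp_all add: poly_of_coeffs_in_ncpolys poly_of_coeffs_eq_0_iff)
    then show "poly_eval sm n c x \<noteq> 0"
      using alg_indep_def[THEN iffD1, OF indep, rule_format] by (auto simp: poly_eval_eq_peval)
  qed
qed

section \<open>Topology and cardinalities\<close>

lemma image_closure_Times_subset:
  assumes "continuous_on UNIV f" "f ` (A \<times> B) \<subseteq> C"
  shows "f ` (closure A \<times> closure B) \<subseteq> closure C"
  using image_closure_subset[of "A \<times> B" f "closure C"] assms closure_subset
  by (auto simp: closure_Times intro: continuous_on_subset)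

context
  fixes sm :: "'k::{comm_ring_1,topological_space} \<Rightarrow> 'a::{comm_ring,topological_space} \<Rightarrow> 'a"
  assumes cta: "comm_top_algebra sm"
begin

lemma continuous_on_sm_left: "continuous_on UNIV (\<lambda>a. sm a x)"
proof -
  have "continuous_on UNIV (\<lambda>a. (a, x))"
    by (intro continuous_intros)
  moreover have "continuous_on (range (\<lambda>a. (a, x))) (\<lambda>p. sm (fst p) (snd p))"
    using cta continuous_on_subset unfolding comm_top_algebra_def by blast
  ultimately show ?thesis
    using continuous_on_compose2 by fastforce
qed

lemma continuous_on_sm_right: "continuous_on UNIV (sm a)"
proof -
  have "continuous_on UNIV (\<lambda>x. (a, x))"
    by (intro continuous_intros)
  moreover have "continuous_on (range (\<lambda>x. (a, x))) (\<lambda>p. sm (fst p) (snd p))"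
    using cta continuous_on_subset unfolding comm_top_algebra_def by blast
  ultimately show ?thesis
    using continuous_on_compose2 by fastforce
qed

lemma is_subalgebra_closure:
  assumes Z: "is_subalgebra sm Z"
  shows "is_subalgebra sm (closure Z)"
  unfolding is_subalgebra_def
proof (intro conjI ballI allI)
  show "0 \<in> closure Z"
    using Z closure_subset unfolding is_subalgebra_def by blast
  fix x y assume xy: "x \<in> closure Z" "y \<in> closure Z"
  have "(\<lambda>p. fst p + snd p) ` (closure Z \<times> closure Z) \<subseteq> closure Z"
    using Z cta unfolding is_subalgebra_def comm_top_algebra_def
    by (intro image_closure_Times_subset) auto
  then show "x + y \<in> closure Z"
    using xy by fastforce
  have "(\<lambda>p. fst p * snd p) ` (closure Z \<times> closure Z) \<subseteq> closure Z"
    using Z cta unfolding is_subalgebra_def comm_top_algebra_def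
    by (intro image_closure_Times_subset) auto
  then show "x * y \<in> closure Z"
    using xy by fastforce
next
  fix a x assume "x \<in> closure Z"
  moreover have "sm a ` Z \<subseteq> Z"
    using Z unfolding is_subalgebra_def by auto
  ultimately show "sm a x \<in> closure Z"
    using image_closure_subset[OF continuous_on_subset[OF continuous_on_sm_right] closed_closure]
      closure_subset by blast
qed

lemma dense_subalgebraI:
  assumes "closure (gen_alg sm F) = UNIV" "F \<subseteq> closure Z" "is_subalgebra sm Z"
  shows "closure Z = UNIV"
proof -
  have "gen_alg sm F \<subseteq> closure Z"
    by (rule gen_alg_minimal[OF is_subalgebra_closure[OF assms(3)] assms(2)])
  then show ?thesis
    using assms(1) by (metis closure_closure closure_mono top.extremum_uniqueI)
qed

end

lemma exists_nonzero_perturbation: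
  fixes sm :: "'k::{comm_ring_1,perfect_space} \<Rightarrow> 'a::{comm_ring,topological_space} \<Rightarrow> 'a"
  assumes "comm_top_algebra sm" "open U" "f \<in> U"
  shows "\<exists>t. t \<noteq> 0 \<and> f + sm t g \<in> U"
proof -
  have "continuous_on UNIV (\<lambda>t. (f, sm t g))"
    by (intro continuous_on_Pair continuous_on_const continuous_on_sm_left[OF assms(1)])
  moreover have "continuous_on UNIV (\<lambda>p :: 'a \<times> 'a. fst p + snd p)"
    using assms(1) unfolding comm_top_algebra_def by blast
  ultimately have "continuous_on UNIV (\<lambda>t. f + sm t g)"
    using continuous_on_compose2[of UNIV "\<lambda>p. fst p + snd p"] by fastforce
  then have "open {t. f + sm t g \<in> U}"
    using open_vimage[OF assms(2)] by (simp add: vimage_def)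
  moreover have "0 \<in> {t. f + sm t g \<in> U}"
    using assms(1,3) alg_action.sm_zero_left[OF comm_top_algebra_imp_alg_action] by fastforce
  ultimately obtain t where "t \<in> {t. f + sm t g \<in> U}" "t \<noteq> 0"
    using islimptE[OF islimpt_UNIV] by metis
  then show ?thesis by blast
qed

lemma weight_le_obtain_indexed_base:
  assumes "weight_le TYPE('a) A"
  obtains \<beta> :: "'c \<Rightarrow> 'a::topological_space set" where "\<And>u. open (\<beta> u)"
    and "\<And>S x. open S \<Longrightarrow> x \<in> S \<Longrightarrow> \<exists>u\<in>A. x \<in> \<beta> u \<and> \<beta> u \<subseteq> S"
proof -
  obtain B :: "'a set set" and g where B: "topological_basis B" and g: "B \<subseteq> g ` A"
    using assms unfolding weight_le_def lepoll_iff by blast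
  define \<beta> where "\<beta> u = (if g u \<in> B then g u else {})" for u
  show ?thesis
  proof (rule that)
    show "open (\<beta> u)" for u
      using topological_basis_open[OF B] by (simp add: \<beta>_def)
    fix S :: "'a set" and x assume "open S" "x \<in> S"
    then obtain U where "U \<in> B" "x \<in> U" "U \<subseteq> S"
      by (metis B topological_basisE)
    moreover obtain u where "u \<in> A" "U = g u"
      using g \<open>U \<in> B\<close> by blast
    ultimately show "\<exists>u\<in>A. x \<in> \<beta> u \<and> \<beta> u \<subseteq> S"
      by (auto simp: \<beta>_def)
  qed
qed

lemma times_eqpoll_self: "infinite A \<Longrightarrow> A \<times> A \<approx> A"
  using card_of_Times_same_infinite[of A] by (simp add: eqpoll_iff_card_of_ordIso)

lemma times_times_eqpoll_self: "infinite A \<Longrightarrow> A \<times> A \<times> A \<approx> A"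
  by (metis times_eqpoll_cong[OF eqpoll_refl times_eqpoll_self] times_eqpoll_self eqpoll_trans)

lemma nat_times_eqpoll_self:
  assumes "infinite A"
  shows "(UNIV :: nat set) \<times> A \<approx> A"
proof (rule lepoll_antisym)
  have "(UNIV :: nat set) \<times> A \<lesssim> A \<times> A"
    using assms by (intro times_lepoll_mono) (simp_all add: infinite_le_lepoll)
  also have "A \<times> A \<lesssim> A"
    by (rule eqpoll_imp_lepoll[OF times_eqpoll_self[OF assms]])
  finally show "(UNIV :: nat set) \<times> A \<lesssim> A" .
  have "A \<approx> {0::nat} \<times> A"
    by (rule eqpoll_sym[OF times_singleton_eqpoll])
  also have "{0::nat} \<times> A \<lesssim> (UNIV :: nat set) \<times> A"
    by (rule subset_imp_lepoll) auto
  finally show "A \<lesssim> (UNIV :: nat set) \<times> A" .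
qed

section \<open>A family of disjoint dense free subalgebras\<close>

locale dense_free_family =
  fixes sm :: "'k::{field,perfect_space} \<Rightarrow> 'a::{comm_ring,topological_space} \<Rightarrow> 'a"
    and A :: "'c set" and F :: "'a set"
    and \<theta> :: "nat \<times> 'c \<Rightarrow> 'a" and \<delta> :: "'c \<Rightarrow> 'c \<times> 'c \<times> 'c" and \<beta> :: "'c \<Rightarrow> 'a set"
  assumes cta: "comm_top_algebra sm"
    and indep_F: "alg_indep sm F"
    and dense_F: "closure (gen_alg sm F) = UNIV"
    and \<theta>_bij: "bij_betw \<theta> (UNIV \<times> A) F"
    and \<delta>_bij: "bij_betw \<delta> A (A \<times> A \<times> A)"
    and \<beta>_open: "\<And>u. open (\<beta> u)"
    and \<beta>_base: "\<And>S x. open S \<Longrightarrow> x \<in> S \<Longrightarrow> \<exists>u\<in>A. x \<in> \<beta> u \<and> \<beta> u \<subseteq> S"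
begin

sublocale alg_action sm
  by (rule comm_top_algebra_imp_alg_action[OF cta])

text \<open>A code \<open>b \<in> A\<close> decodes as \<open>\<delta> b = (a, u, k)\<close>: the generator with index \<open>(n + 1, b)\<close>
  perturbs its \<open>target\<close> \<open>\<theta> (n, a)\<close> within the \<open>nbhd\<close> \<open>\<beta> u\<close> and
  belongs to the subalgebra with \<open>label\<close> \<open>k\<close>; \<open>inv_poly\<close> undoes the
  perturbation by recursion on the level \<open>n\<close>.\<close>

definition target :: "nat \<Rightarrow> 'c \<Rightarrow> 'a" where
  "target n b = \<theta> (n, fst (\<delta> b))"

definition nbhd :: "'c \<Rightarrow> 'a set" where
  "nbhd b = \<beta> (fst (snd (\<delta> b)))"

definition label :: "'c \<Rightarrow> 'c" where
  "label b = snd (snd (\<delta> b))"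

definition coeff :: "nat \<Rightarrow> 'c \<Rightarrow> 'k" where
  "coeff n b = (SOME t. t \<noteq> 0 \<and>
     (target n b \<in> nbhd b \<longrightarrow> target n b + sm t (\<theta> (Suc n, b)) \<in> nbhd b))"

fun gen :: "nat \<times> 'c \<Rightarrow> 'a" where
  "gen (0, b) = \<theta> (0, b)"
| "gen (Suc n, b) = target n b + sm (coeff n b) (\<theta> (Suc n, b))"

fun gen_poly :: "nat \<times> 'c \<Rightarrow> 'a multiset \<Rightarrow>\<^sub>0 'k" where
  "gen_poly (0, b) = pvar (\<theta> (0, b))"
| "gen_poly (Suc n, b) = pvar (target n b) + poly_smult (coeff n b) (pvar (\<theta> (Suc n, b)))"

fun inv_poly :: "nat \<Rightarrow> 'c \<Rightarrow> (nat \<times> 'c) multiset \<Rightarrow>\<^sub>0 'k" where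
  "inv_poly 0 b = pvar (0, b)"
| "inv_poly (Suc n) b =
     poly_smult (inverse (coeff n b)) (pvar (Suc n, b) - inv_poly n (fst (\<delta> b)))"

definition block :: "'c \<Rightarrow> (nat \<times> 'c) set" where
  "block k = {(Suc n, b) |n b. b \<in> A \<and> label b = k}"

definition subalg :: "'c \<Rightarrow> 'a set" where
  "subalg k = gen_alg sm (gen ` block k)"

lemma \<delta>_in: "b \<in> A \<Longrightarrow> fst (\<delta> b) \<in> A"
  using bij_betwE[OF \<delta>_bij] by (simp add: mem_Times_iff)

lemma \<theta>_in: "j \<in> UNIV \<times> A \<Longrightarrow> \<theta> j \<in> F"
  using \<theta>_bij by (auto simp: bij_betw_def)

lemma coeff_spec:
  "coeff n b \<noteq> 0 \<and> (target n b \<in> nbhd b \<longrightarrow> gen (Suc n, b) \<in> nbhd b)"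
proof -
  have "\<exists>t. t \<noteq> 0 \<and> (target n b \<in> nbhd b \<longrightarrow> target n b + sm t (\<theta> (Suc n, b)) \<in> nbhd b)"
  proof (cases "target n b \<in> nbhd b")
    case True
    then show ?thesis
      using exists_nonzero_perturbation[OF cta \<beta>_open] by (simp add: nbhd_def)
  qed (auto intro: exI[of _ 1])
  then show ?thesis
    unfolding coeff_def gen.simps by (rule someI_ex)
qed

lemma peval_gen_poly: "peval sm id (gen_poly j) = gen j"
  by (cases j rule: gen.cases) (simp_all add: peval_add peval_smult peval_pvar)

lemma gen_poly_in_ncpolys: "j \<in> UNIV \<times> A \<Longrightarrow> gen_poly j \<in> ncpolys F"
  by (cases j rule: gen.cases)
    (auto simp: target_def \<theta>_in \<delta>_in intro!: ncpolys_add ncpolys_smult ncpolys_pvar)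

lemma peval_inv_poly_gen_poly:
  assumes "j \<in> UNIV \<times> A"
  shows "peval poly_smult (case_prod inv_poly \<circ> inv_into (UNIV \<times> A) \<theta>) (gen_poly j) = pvar j"
proof -
  have subst: "(case_prod inv_poly \<circ> inv_into (UNIV \<times> A) \<theta>) (\<theta> i) = case_prod inv_poly i"
    if "i \<in> UNIV \<times> A" for i
    using that \<theta>_bij by (simp add: bij_betw_def)
  show ?thesis
  proof (cases j rule: gen.cases)
    case (1 b)
    then show ?thesis
      using assms subst by (simp add: poly_action.peval_pvar)
  next
    case (2 n b)
    then have "b \<in> A"
      using assms by simp
    have "coeff n b * inverse (coeff n b) = 1"
      using coeff_spec by simp
    then show ?thesis
      using 2 assms subst \<delta>_in[OF \<open>b \<in> A\<close>]
      by (simp add: target_def poly_action.peval_add poly_action.peval_smult poly_action.peval_pvar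
          poly_action.sm_sm poly_action.sm_one)
  qed
qed

lemma inj_on_gen: "inj_on gen (UNIV \<times> A)"
  by (rule inj_on_of_substitution[OF indep_F gen_poly_in_ncpolys peval_gen_poly
        peval_inv_poly_gen_poly])

lemma alg_indep_gen: "alg_indep sm (gen ` (UNIV \<times> A))"
  by (rule alg_indep_of_substitution[OF indep_F gen_poly_in_ncpolys peval_gen_poly
        peval_inv_poly_gen_poly])

lemma block_subset: "block k \<subseteq> UNIV \<times> A"
  unfolding block_def by auto

lemma block_eqpoll:
  assumes "infinite A" "k \<in> A"
  shows "block k \<approx> A"
proof -
  have image_\<delta>: "\<delta> ` {b \<in> A. label b = k} = A \<times> A \<times> {k}"
  proof
    show "\<delta> ` {b \<in> A. label b = k} \<subseteq> A \<times> A \<times> {k}"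
      using bij_betwE[OF \<delta>_bij] by (auto simp: label_def)
    show "A \<times> A \<times> {k} \<subseteq> \<delta> ` {b \<in> A. label b = k}"
    proof
      fix p assume p: "p \<in> A \<times> A \<times> {k}"
      then obtain b where "b \<in> A" "p = \<delta> b"
        using bij_betw_imp_surj_on[OF \<delta>_bij] assms(2) by blast
      then show "p \<in> \<delta> ` {b \<in> A. label b = k}"
        using p by (auto simp: label_def)
    qed
  qed
  have "bij_betw \<delta> {b \<in> A. label b = k} (A \<times> A \<times> {k})"
    by (rule bij_betw_subset[OF \<delta>_bij _ image_\<delta>]) auto
  then have "{b \<in> A. label b = k} \<approx> A \<times> A \<times> {k}"
    unfolding eqpoll_def by blast
  also have "\<dots> \<approx> A \<times> A"
    by (rule times_eqpoll_cong[OF eqpoll_refl eqpoll_trans[OF times_commute_eqpoll times_singleton_eqpoll]])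
  also have "\<dots> \<approx> A"
    by (rule times_eqpoll_self[OF assms(1)])
  finally have labelled: "{b \<in> A. label b = k} \<approx> A" .
  have "block k = (\<lambda>(n, b). (Suc n, b)) ` (UNIV \<times> {b \<in> A. label b = k})"
    unfolding block_def by auto
  also have "\<dots> \<approx> (UNIV :: nat set) \<times> {b \<in> A. label b = k}"
    by (rule inj_on_image_eqpoll_self) (auto simp: inj_on_def)
  also have "\<dots> \<approx> (UNIV :: nat set) \<times> A"
    by (rule times_eqpoll_cong[OF eqpoll_refl labelled])
  also have "\<dots> \<approx> A"
    by (rule nat_times_eqpoll_self[OF assms(1)])
  finally show ?thesis .
qed

lemma subalg_subset: "subalg k \<subseteq> gen_alg sm F"
  unfolding subalg_def
proof (rule gen_alg_minimal[OF is_subalgebra_gen_alg], rule image_subsetI)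
  fix j assume "j \<in> block k"
  then have "gen_poly j \<in> ncpolys F"
    using block_subset gen_poly_in_ncpolys by blast
  then show "gen j \<in> gen_alg sm F"
    using peval_in_gen_alg by (simp flip: peval_gen_poly)
qed

lemma free_subalgebra_card_subalg:
  assumes "infinite A" "k \<in> A"
  shows "free_subalgebra_card sm A (subalg k)"
  unfolding free_subalgebra_card_def
proof (intro exI conjI)
  show "SFG sm (gen ` block k)"
    using alg_indep_subset[OF alg_indep_gen] block_subset SFG_iff_alg_indep by blast
  have "gen ` block k \<approx> block k"
    by (rule inj_on_image_eqpoll_self[OF inj_on_subset[OF inj_on_gen block_subset]])
  then show "gen ` block k \<approx> A"
    using block_eqpoll[OF assms] by (rule eqpoll_trans)
qed (simp add: subalg_def)

lemma subalg_Int_subalg: "k1 \<noteq> k2 \<Longrightarrow> subalg k1 \<inter> subalg k2 = {0}"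
  unfolding subalg_def
proof (rule gen_alg_Int_gen_alg[OF alg_indep_gen])
  assume "k1 \<noteq> k2"
  then have "block k1 \<inter> block k2 = {}"
    unfolding block_def by auto
  then show "gen ` block k1 \<inter> gen ` block k2 = {}"
    using inj_on_gen block_subset by (simp add: inj_on_image_Int[symmetric])
qed (use block_subset in auto)

lemma closure_subalg:
  assumes "k \<in> A"
  shows "closure (subalg k) = UNIV"
proof (rule dense_subalgebraI[OF cta dense_F _ is_subalgebra_gen_alg[of sm "gen ` block k",
        folded subalg_def]], rule subsetI)
  fix f assume "f \<in> F"
  then obtain n a where a: "a \<in> A" and f: "f = \<theta> (n, a)"
    using \<theta>_bij unfolding bij_betw_def by auto
  show "f \<in> closure (subalg k)"
    unfolding closure_iff_nhds_not_empty
  proof (intro allI impI)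
    fix W S assume "S \<subseteq> W" "open S" "f \<in> S"
    then obtain u where u: "u \<in> A" "f \<in> \<beta> u" "\<beta> u \<subseteq> S"
      using \<beta>_base by blast
    define b where "b = inv_into A \<delta> (a, u, k)"
    have "b \<in> A" "\<delta> b = (a, u, k)"
      unfolding b_def using \<delta>_bij a u(1) assms
      by (auto intro: inv_into_into bij_betw_inv_into_right simp: bij_betw_def)
    then have "(Suc n, b) \<in> block k" "target n b = f" "nbhd b = \<beta> u"
      by (simp_all add: block_def label_def target_def nbhd_def f)
    then have "gen (Suc n, b) \<in> S"
      using coeff_spec[of n b] u by auto
    moreover have "gen (Suc n, b) \<in> subalg k"
      unfolding subalg_def using \<open>(Suc n, b) \<in> block k\<close> gen_alg_superset by blast
    ultimately show "subalg k \<inter> W \<noteq> {}"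
      using \<open>S \<subseteq> W\<close> by blast
  qed
qed

end

lemma inf_strongly_dense_algebrable_imp_strongly:
  fixes sm :: "'k::comm_ring_1 \<Rightarrow> 'a::{comm_ring,topological_space} \<Rightarrow> 'a" and A :: "'c set"
  assumes "A \<noteq> {}" "inf_strongly_dense_algebrable sm A M"
  shows "strongly_dense_algebrable sm A M"
proof -
  obtain Y :: "'c \<Rightarrow> 'a set" where
    Y: "\<forall>\<kappa>\<in>A. free_subalgebra_card sm A (Y \<kappa>) \<and> closure (Y \<kappa>) = UNIV \<and> Y \<kappa> \<subseteq> M \<union> {0}"
    using assms(2) unfolding inf_strongly_dense_algebrable_def by (elim exE conjE)
  obtain \<kappa> where "\<kappa> \<in> A"
    using assms(1) by blast
  with Y show ?thesis
    unfolding strongly_dense_algebrable_def by blast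
qed

lemma strongly_dense_algebrable_imp_inf:
  fixes sm :: "'k::{field,perfect_space} \<Rightarrow> 'a::{comm_ring,topological_space} \<Rightarrow> 'a"
    and A :: "'c set"
  assumes cta: "comm_top_algebra sm" and "infinite A" "weight_le TYPE('a) A"
    and "strongly_dense_algebrable sm A M"
  shows "inf_strongly_dense_algebrable sm A M"
proof -
  obtain Y where Y: "free_subalgebra_card sm A Y" "closure Y = UNIV" "Y \<subseteq> M \<union> {0}"
    using assms(4) unfolding strongly_dense_algebrable_def by (elim exE conjE) (rule that)
  then obtain F where F: "SFG sm F" "F \<approx> A" "Y = gen_alg sm F"
    unfolding free_subalgebra_card_def by (elim exE conjE) (rule that)
  obtain \<theta> where \<theta>: "bij_betw \<theta> ((UNIV :: nat set) \<times> A) F"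
    using eqpoll_trans[OF nat_times_eqpoll_self[OF assms(2)] eqpoll_sym[OF F(2)]]
    unfolding eqpoll_def by (elim exE)
  obtain \<delta> where \<delta>: "bij_betw \<delta> A (A \<times> A \<times> A)"
    using eqpoll_sym[OF times_times_eqpoll_self[OF assms(2)]] unfolding eqpoll_def by (elim exE)
  obtain \<beta> :: "'c \<Rightarrow> 'a set" where \<beta>: "\<And>u. open (\<beta> u)"
    "\<And>S x. open S \<Longrightarrow> x \<in> S \<Longrightarrow> \<exists>u\<in>A. x \<in> \<beta> u \<and> \<beta> u \<subseteq> S"
    using weight_le_obtain_indexed_base[OF assms(3)] by metis
  have "alg_indep sm F"
    using F(1) alg_action.SFG_iff_alg_indep[OF comm_top_algebra_imp_alg_action[OF cta]] by simp
  then interpret dense_free_family sm A F \<theta> \<delta> \<beta>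
    using Y(2) F(3) by unfold_locales (simp_all add: cta \<theta> \<delta> \<beta>)
  show ?thesis
    unfolding inf_strongly_dense_algebrable_def
  proof (intro exI[of _ subalg] conjI ballI impI)
    fix k assume "k \<in> A"
    then show "free_subalgebra_card sm A (subalg k)" "closure (subalg k) = UNIV"
      by (simp_all add: free_subalgebra_card_subalg[OF assms(2)] closure_subalg)
    show "subalg k \<subseteq> M \<union> {0}"
      using subalg_subset Y(3) F(3) by blast
  qed (rule subalg_Int_subalg)
qed

lemma inf_strongly_dense_algebrable_iff_strongly:
  fixes sm :: "'k::{field,perfect_space} \<Rightarrow> 'a::{comm_ring,topological_space} \<Rightarrow> 'a"
  assumes "comm_top_algebra sm" "infinite A" "weight_le TYPE('a) A"
  shows "inf_strongly_dense_algebrable sm A M \<longleftrightarrow> strongly_dense_algebrable sm A M"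
proof
  have "A \<noteq> {}"
    using assms(2) by blast
  then show "inf_strongly_dense_algebrable sm A M \<Longrightarrow> strongly_dense_algebrable sm A M"
    by (rule inf_strongly_dense_algebrable_imp_strongly)
qed (rule strongly_dense_algebrable_imp_inf[OF assms])

theorem theorem4p6:
  fixes M :: "'a::{comm_ring,topological_space} set"
    and A :: "'c set"
  assumes "infinite A"
    and "weight_le TYPE('a) A"
  shows "(\<forall>sm :: real \<Rightarrow> 'a \<Rightarrow> 'a. comm_top_algebra sm \<longrightarrow>
            (inf_strongly_dense_algebrable sm A M \<longleftrightarrow> strongly_dense_algebrable sm A M)) \<and>
         (\<forall>sm :: complex \<Rightarrow> 'a \<Rightarrow> 'a. comm_top_algebra sm \<longrightarrow>
            (inf_strongly_dense_algebrable sm A M \<longleftrightarrow> strongly_dense_algebrable sm A M))"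
  by (simp add: inf_strongly_dense_algebrable_iff_strongly assms)

end
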